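(* For any time warps $f$ and $g$: $\mathrm{last}(f\circ g)=\omega$ if, and only if, $\mathrm{last}(g)=\mathrm{last}(f)=\omega$; and $\mathrm{last}(f^\star)=\omega$ if, and only if, $\mathrm{last}(f)=\omega$.
   Context: Let $\omega^+=\omega\cup\{\omega\}$. A time warp is a join-preserving map $f\colon\omega^+\to\omega^+$, time warps being ordered pointwise. $p(m)=\bigvee\{k\in\omega\mid k<m\}$; $f^\star$ is the largest time warp $h$ with $f\circ h\le p$. For a time warp $f$, $\mathrm{last}(f)=\min\{m\in\omega^+\mid f(m)=f(\omega)\}$. *)

theory Defs
  imports "HOL-Library.Extended_Nat"
begin

text \<open>omega^+ is modelled by enat: the naturals plus infinity (= omega).
  A time warp is a map preserving all joins (arbitrary suprema, including the empty one).\<close>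

definition time_warp :: "(enat \<Rightarrow> enat) \<Rightarrow> bool" where
  "time_warp f \<longleftrightarrow> (\<forall>A. f (Sup A) = Sup (f ` A))"

definition pred_tw :: "enat \<Rightarrow> enat" where
  "pred_tw m = Sup {enat k | k. enat k < m}"

definition star :: "(enat \<Rightarrow> enat) \<Rightarrow> (enat \<Rightarrow> enat)" where
  "star f = (GREATEST h. time_warp h \<and> f \<circ> h \<le> pred_tw)"

definition last_tw :: "(enat \<Rightarrow> enat) \<Rightarrow> enat" where
  "last_tw f = (LEAST m. f m = f \<infinity>)"

end

theory Submission
  imports Defs
begin

(* Since f \<omega> is the supremum of the f n, a time warp f has last f = \<omega> exactly when f maps
   finite to finite and \<omega> to \<omega>: if f \<omega> is finite it is attained at some finite n.
   Both properties pass through composition in both directions, using monotonicity and the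
   unboundedness of g on finite arguments when g \<omega> = \<omega>. For the star, f\<^sup>\<star> is computed
   explicitly as f\<^sup>\<star> m = \<Squnion>{k | f k < m}: f\<^sup>\<star> m is finite for every finite m iff f is
   unbounded, and f\<^sup>\<star> \<omega> = \<omega> iff f is finite on finite arguments. *)

lemma time_warp_mono:
  assumes "time_warp f"
  shows "mono f"
proof
  fix x y :: enat
  assume "x \<le> y"
  then have "f y = Sup {f x, f y}"
    using assms unfolding time_warp_def by (metis image_insert image_empty sup_absorb2 Sup_insert ccpo_Sup_singleton)
  then show "f x \<le> f y"
    by (metis Sup_upper insertI1)
qed

lemma time_warp_comp:
  assumes "time_warp f" and "time_warp g"
  shows "time_warp (f \<circ> g)"
  using assms unfolding time_warp_def by (simp add: image_comp)

lemma Sup_range_enat: "Sup (range enat) = \<infinity>"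
  unfolding Sup_enat_def using finite_imageD[of enat UNIV] by (auto simp: inj_on_def)

lemma time_warp_infinity:
  assumes "time_warp f"
  shows "f \<infinity> = (SUP n. f (enat n))"
  using assms unfolding time_warp_def by (metis Sup_range_enat image_image)

lemma time_warp_le_if_le_on_finite:
  assumes "time_warp h" and "time_warp h'" and "\<And>n. h (enat n) \<le> h' (enat n)"
  shows "h \<le> h'"
proof (rule le_funI)
  fix m
  show "h m \<le> h' m"
  proof (cases m)
    case infinity
    then show ?thesis
      using time_warp_infinity[OF assms(1)] time_warp_infinity[OF assms(2)] assms(3)
      by (simp add: SUP_mono')
  qed (simp add: assms(3))
qed

lemma time_warp_infinity_attained:
  assumes "time_warp f" and "f \<infinity> \<noteq> \<infinity>"
  obtains n where "f (enat n) = f \<infinity>"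
proof -
  let ?A = "range (\<lambda>n. f (enat n))"
  have Sup: "f \<infinity> = Sup ?A"
    using time_warp_infinity[OF assms(1)] by simp
  with assms(2) have "finite ?A"
    unfolding Sup_enat_def by (auto split: if_splits)
  then have "Sup ?A \<in> ?A"
    unfolding Sup_enat_def by (simp add: Max_in)
  with Sup that show thesis by auto
qed

lemma time_warp_unbounded:
  assumes "time_warp f" and "f \<infinity> = \<infinity>"
  obtains n where "enat m \<le> f (enat n)"
proof (rule ccontr)
  assume "\<not> thesis"
  with that have "(SUP n. f (enat n)) \<le> enat m"
    by (meson SUP_least linear)
  with assms show False
    using time_warp_infinity[OF assms(1)] by simp
qed

lemma last_tw_eq_infinity_iff: "last_tw f = \<infinity> \<longleftrightarrow> (\<forall>n. f (enat n) \<noteq> f \<infinity>)"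
proof
  assume last: "last_tw f = \<infinity>"
  show "\<forall>n. f (enat n) \<noteq> f \<infinity>"
  proof (intro allI notI)
    fix n
    assume "f (enat n) = f \<infinity>"
    then have "last_tw f \<le> enat n"
      unfolding last_tw_def by (rule Least_le)
    with last show False by simp
  qed
next
  assume "\<forall>n. f (enat n) \<noteq> f \<infinity>"
  moreover have "f (last_tw f) = f \<infinity>"
    unfolding last_tw_def by (rule LeastI[of _ \<infinity>]) simp
  ultimately show "last_tw f = \<infinity>"
    by (cases "last_tw f") auto
qed

lemma time_warp_last_tw_eq_infinity_iff:
  assumes "time_warp f"
  shows "last_tw f = \<infinity> \<longleftrightarrow> f \<infinity> = \<infinity> \<and> (\<forall>n. f (enat n) \<noteq> \<infinity>)"
  using time_warp_infinity_attained[OF assms] by (metis last_tw_eq_infinity_iff)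

lemma last_tw_comp_eq_infinity_iff:
  assumes f: "time_warp f" and g: "time_warp g"
  shows "last_tw (f \<circ> g) = \<infinity> \<longleftrightarrow> last_tw g = \<infinity> \<and> last_tw f = \<infinity>"
proof -
  have "g \<infinity> = \<infinity> \<and> (\<forall>n. g (enat n) \<noteq> \<infinity>) \<and> f \<infinity> = \<infinity> \<and> (\<forall>m. f (enat m) \<noteq> \<infinity>)"
    if fg_inf: "f (g \<infinity>) = \<infinity>" and fg_fin: "\<forall>n. f (g (enat n)) \<noteq> \<infinity>"
  proof (intro conjI allI)
    show g_inf: "g \<infinity> = \<infinity>"
      using time_warp_infinity_attained[OF g] fg_inf fg_fin by metis
    show f_inf: "f \<infinity> = \<infinity>"
      using fg_inf g_inf by simp
    show "g (enat n) \<noteq> \<infinity>" for n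
      using fg_fin f_inf by metis
    show "f (enat m) \<noteq> \<infinity>" for m
    proof -
      obtain n where "enat m \<le> g (enat n)"
        using time_warp_unbounded[OF g g_inf] .
      then have "f (enat m) \<le> f (g (enat n))"
        by (rule monoD[OF time_warp_mono[OF f]])
      with fg_fin show ?thesis
        by (metis enat_ord_simps(5) top.extremum_uniqueI)
    qed
  qed
  moreover have "f (g (enat n)) \<noteq> \<infinity>"
    if "\<forall>n. g (enat n) \<noteq> \<infinity>" and "\<forall>m. f (enat m) \<noteq> \<infinity>" for n
    using that by (metis not_infinity_eq)
  ultimately show ?thesis
    using f g time_warp_comp[OF f g]
    by (auto simp: time_warp_last_tw_eq_infinity_iff)
qed

lemma pred_tw_Suc: "pred_tw (enat (Suc j)) = enat j"
  unfolding pred_tw_def by (rule antisym) (auto intro!: Sup_least Sup_upper)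

lemma le_pred_tw_if_less: "x < m \<Longrightarrow> x \<le> pred_tw m"
  unfolding pred_tw_def by (cases x) (auto intro: Sup_upper)

lemma time_warp_zero: "time_warp h \<Longrightarrow> h 0 = 0"
  unfolding time_warp_def by (metis Sup_empty image_empty bot_enat_def)

lemma time_warp_Sup_below: "time_warp (\<lambda>m. Sup {k. f k < m})"
  unfolding time_warp_def
proof
  fix A :: "enat set"
  have "{k. f k < Sup A} = (\<Union>a\<in>A. {k. f k < a})"
    by (auto simp: less_Sup_iff)
  then show "Sup {k. f k < Sup A} = Sup ((\<lambda>m. Sup {k. f k < m}) ` A)"
    using SUP_UNION[of "\<lambda>k. k" "\<lambda>a. {k. f k < a}" A] by simp
qed

lemma star_eq_Sup_below:
  assumes f: "time_warp f"
  shows "star f = (\<lambda>m. Sup {k. f k < m})"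
  unfolding star_def
proof (rule Greatest_equality)
  show "time_warp (\<lambda>m. Sup {k. f k < m}) \<and> f \<circ> (\<lambda>m. Sup {k. f k < m}) \<le> pred_tw"
  proof (intro conjI le_funI time_warp_Sup_below)
    fix m
    have "(f \<circ> (\<lambda>m. Sup {k. f k < m})) m = Sup (f ` {k. f k < m})"
      using f unfolding time_warp_def by simp
    also have "\<dots> \<le> pred_tw m"
      by (rule Sup_least) (auto intro: le_pred_tw_if_less)
    finally show "(f \<circ> (\<lambda>m. Sup {k. f k < m})) m \<le> pred_tw m" .
  qed
next
  fix h
  assume "time_warp h \<and> f \<circ> h \<le> pred_tw"
  then have h: "time_warp h" and below: "\<And>m. f (h m) \<le> pred_tw m"
    by (auto simp: le_fun_def)
  have "h (enat j) \<le> Sup {k. f k < enat j}" for j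
  proof (cases j)
    case 0
    then show ?thesis
      using time_warp_zero[OF h] by (simp add: zero_enat_def[symmetric])
  next
    case (Suc i)
    then have "f (h (enat j)) < enat j"
      using below[of "enat j"] pred_tw_Suc by (simp add: order_le_less_trans)
    then show ?thesis by (auto intro: Sup_upper)
  qed
  then show "h \<le> (\<lambda>m. Sup {k. f k < m})"
    using time_warp_le_if_le_on_finite[OF h time_warp_Sup_below] by blast
qed

lemma Sup_below_le_if_le:
  fixes f :: "enat \<Rightarrow> enat"
  assumes "mono f" and "m \<le> f N"
  shows "Sup {k. f k < m} \<le> N"
proof (rule Sup_least)
  fix k
  assume "k \<in> {k. f k < m}"
  with assms(2) have "f k < f N" by simp
  with assms(1) show "k \<le> N"
    by (auto elim: mono_strict_invE)
qed

lemma last_tw_star_eq_infinity_iff: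
  assumes f: "time_warp f"
  shows "last_tw (star f) = \<infinity> \<longleftrightarrow> last_tw f = \<infinity>"
proof -
  let ?S = "\<lambda>m. Sup {k. f k < m}"
  have mono: "mono f"
    using time_warp_mono[OF f] .
  have "?S \<infinity> = \<infinity> \<longleftrightarrow> (\<forall>n. f (enat n) \<noteq> \<infinity>)"
  proof
    assume S_inf: "?S \<infinity> = \<infinity>"
    show "\<forall>n. f (enat n) \<noteq> \<infinity>"
    proof (intro allI notI)
      fix n
      assume "f (enat n) = \<infinity>"
      then have "?S \<infinity> \<le> enat n"
        by (intro Sup_below_le_if_le[OF mono]) simp
      with S_inf show False by simp
    qed
  next
    assume "\<forall>n. f (enat n) \<noteq> \<infinity>"
    then have "range enat \<subseteq> {k. f k < \<infinity>}"
      by auto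
    then have "Sup (range enat) \<le> ?S \<infinity>"
      by (rule Sup_subset_mono)
    then show "?S \<infinity> = \<infinity>"
      by (simp add: Sup_range_enat)
  qed
  moreover have "(\<forall>n. ?S (enat n) \<noteq> \<infinity>) \<longleftrightarrow> f \<infinity> = \<infinity>"
  proof
    assume S_fin: "\<forall>n. ?S (enat n) \<noteq> \<infinity>"
    show "f \<infinity> = \<infinity>"
    proof (rule ccontr)
      assume "f \<infinity> \<noteq> \<infinity>"
      then obtain c where c: "f \<infinity> = enat c"
        by auto
      have "f k < enat (Suc c)" for k
      proof -
        have "f k \<le> f \<infinity>"
          by (rule monoD[OF mono]) simp
        with c show ?thesis
          using order_le_less_trans[of "f k" "enat c" "enat (Suc c)"] by simp
      qed
      then have "?S (enat (Suc c)) = \<infinity>"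
        by (simp add: top_enat_def[symmetric])
      with S_fin show False by blast
    qed
  next
    assume f_inf: "f \<infinity> = \<infinity>"
    show "\<forall>n. ?S (enat n) \<noteq> \<infinity>"
    proof
      fix n
      obtain i where "enat n \<le> f (enat i)"
        using time_warp_unbounded[OF f f_inf] .
      then have "?S (enat n) \<le> enat i"
        by (rule Sup_below_le_if_le[OF mono])
      then show "?S (enat n) \<noteq> \<infinity>"
        using enat_ile by fastforce
    qed
  qed
  moreover have "last_tw (star f) = \<infinity> \<longleftrightarrow> ?S \<infinity> = \<infinity> \<and> (\<forall>n. ?S (enat n) \<noteq> \<infinity>)"
    unfolding star_eq_Sup_below[OF f] by (rule time_warp_last_tw_eq_infinity_iff[OF time_warp_Sup_below])
  ultimately show ?thesis
    using time_warp_last_tw_eq_infinity_iff[OF f] by argo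
qed

theorem lemma2p6:
  assumes "time_warp f" and "time_warp g"
  shows "(last_tw (f \<circ> g) = \<infinity> \<longleftrightarrow> last_tw g = \<infinity> \<and> last_tw f = \<infinity>)
       \<and> (last_tw (star f) = \<infinity> \<longleftrightarrow> last_tw f = \<infinity>)"
  using last_tw_comp_eq_infinity_iff[OF assms] last_tw_star_eq_infinity_iff[OF assms(1)] by blast

end
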